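(* Let $X,Y$ be metrizable vector spaces over $K$ with metrics $d_X,d_Y$. If $Y$ is complete, then $[B_d(X,Y),d]$ is a complete metric space.
   Context: $K$ is $\mathbb{R}$ or $\mathbb{C}$. For maps $F_1,F_2:X\to Y$, $d(F_1,F_2)=\max\left\{\sup_{x\neq0,x\in X}\frac{d_Y[F_1(x),F_2(x)]}{d_X(x,0)},\ d_Y[F_1(0),F_2(0)]\right\}\in[0,\infty]$, and $B_d(X,Y)$ is the set of maps $F:X\to Y$ with $d(F,0)<\infty$; $d$ is a metric on $B_d(X,Y)$. *)

theory Defs
  imports "HOL-Analysis.Analysis"
begin

definition metric_tvs :: "('a::real_vector \<Rightarrow> 'a \<Rightarrow> real) \<Rightarrow> bool" where
  "metric_tvs dX \<longleftrightarrow>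
     Metric_space UNIV dX \<and>
     continuous_map (prod_topology (Metric_space.mtopology UNIV dX) (Metric_space.mtopology UNIV dX))
        (Metric_space.mtopology UNIV dX) (\<lambda>(x, y). x + y) \<and>
     continuous_map (prod_topology euclideanreal (Metric_space.mtopology UNIV dX))
        (Metric_space.mtopology UNIV dX) (\<lambda>(a, x). a *\<^sub>R x)"

definition map_dist ::
  "('a::real_vector \<Rightarrow> 'a \<Rightarrow> real) \<Rightarrow> ('b::real_vector \<Rightarrow> 'b \<Rightarrow> real)
    \<Rightarrow> ('a \<Rightarrow> 'b) \<Rightarrow> ('a \<Rightarrow> 'b) \<Rightarrow> ereal" where
  "map_dist dX dY F1 F2 =
     max (SUP x\<in>{x. x \<noteq> 0}. ereal (dY (F1 x) (F2 x) / dX x 0)) (ereal (dY (F1 0) (F2 0)))"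

definition Bd :: "('a::real_vector \<Rightarrow> 'a \<Rightarrow> real) \<Rightarrow> ('b::real_vector \<Rightarrow> 'b \<Rightarrow> real)
    \<Rightarrow> ('a \<Rightarrow> 'b) set" where
  "Bd dX dY = {F. map_dist dX dY F (\<lambda>_. 0) < \<infinity>}"

definition Bd_dist :: "('a::real_vector \<Rightarrow> 'a \<Rightarrow> real) \<Rightarrow> ('b::real_vector \<Rightarrow> 'b \<Rightarrow> real)
    \<Rightarrow> ('a \<Rightarrow> 'b) \<Rightarrow> ('a \<Rightarrow> 'b) \<Rightarrow> real" where
  "Bd_dist dX dY F1 F2 = real_of_ereal (map_dist dX dY F1 F2)"

end

theory Submission
  imports Defs
begin

text \<open>Writing w x for d_X(x,0) when x \<noteq> 0 and w 0 = 1, the distance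
  d(F,G) is the least c with d_Y(F x, G x) \<le> c w x for all x. Hence a Cauchy sequence in
  B_d(X,Y) is pointwise Cauchy, has a pointwise limit f by completeness of Y, and passing to
  the limit in d_Y(F_n x, F_m x) \<le> \<epsilon> w x gives d(F_n, f) \<le> \<epsilon>; in particular f \<in> B_d(X,Y).\<close>

definition dist_weight :: "('a::real_vector \<Rightarrow> 'a \<Rightarrow> real) \<Rightarrow> 'a \<Rightarrow> real" where
  "dist_weight dX x = (if x = 0 then 1 else dX x 0)"

lemma map_dist_eq_SUP:
  "map_dist dX dY F G = (SUP x. ereal (dY (F x) (G x) / dist_weight dX x))"
proof -
  define f where "f x = ereal (dY (F x) (G x) / dist_weight dX x)" for x
  have UNIV_split: "(UNIV :: 'a set) = insert 0 {x. x \<noteq> 0}"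
    by auto
  have "(SUP x. f x) = sup (f 0) (SUP x\<in>{x. x \<noteq> 0}. f x)"
    unfolding UNIV_split by (rule SUP_insert)
  also have "(SUP x\<in>{x. x \<noteq> 0}. f x) = (SUP x\<in>{x. x \<noteq> 0}. ereal (dY (F x) (G x) / dX x 0))"
    by (rule SUP_cong) (auto simp: f_def dist_weight_def)
  finally show ?thesis
    unfolding map_dist_def f_def by (simp add: dist_weight_def sup_max max.commute)
qed

locale map_metric =
  fixes dX :: "'a::real_vector \<Rightarrow> 'a \<Rightarrow> real" and dY :: "'b::real_vector \<Rightarrow> 'b \<Rightarrow> real"
  assumes X: "Metric_space UNIV dX" and Y: "Metric_space UNIV dY"
begin

lemma dist_weight_pos: "dist_weight dX x > 0"
  using Metric_space.nonneg[OF X, of x 0] Metric_space.zero[OF X, of x 0]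
  by (auto simp: dist_weight_def)

lemma map_dist_le_iff:
  "map_dist dX dY F G \<le> ereal c \<longleftrightarrow> (\<forall>x. dY (F x) (G x) \<le> c * dist_weight dX x)"
  unfolding map_dist_eq_SUP SUP_le_iff ereal_less_eq
  using dist_weight_pos by (simp add: pos_divide_le_eq)

lemma map_dist_nonneg: "0 \<le> map_dist dX dY F G"
  unfolding map_dist_def using Metric_space.nonneg[OF Y] by (simp add: le_max_iff_disj)

lemma map_dist_commute: "map_dist dX dY F G = map_dist dX dY G F"
  unfolding map_dist_def by (simp add: Metric_space.commute[OF Y])

lemma map_dist_self: "map_dist dX dY F F = 0"
proof -
  have "map_dist dX dY F F \<le> ereal 0"
    unfolding map_dist_le_iff using Metric_space.zero[OF Y, of "F x" "F x" for x] by simp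
  then show ?thesis
    using map_dist_nonneg[of F F] by (simp add: zero_ereal_def)
qed

lemma map_dist_triangle:
  assumes "map_dist dX dY F G \<le> ereal a" "map_dist dX dY G H \<le> ereal b"
  shows "map_dist dX dY F H \<le> ereal (a + b)"
proof -
  have "dY (F x) (H x) \<le> (a + b) * dist_weight dX x" for x
  proof -
    have "dY (F x) (H x) \<le> dY (F x) (G x) + dY (G x) (H x)"
      using Metric_space.triangle[OF Y] by simp
    also have "\<dots> \<le> a * dist_weight dX x + b * dist_weight dX x"
      using assms map_dist_le_iff by (meson add_mono)
    finally show ?thesis by (simp add: distrib_right)
  qed
  then show ?thesis using map_dist_le_iff by blast
qed

lemma Bd_finite_distance:
  assumes "F \<in> Bd dX dY"
  obtains a where "map_dist dX dY F (\<lambda>_. 0) = ereal a"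
  using assms map_dist_nonneg[of F "\<lambda>_. 0"]
  by (cases "map_dist dX dY F (\<lambda>_. 0)") (auto simp: Bd_def)

lemma Bd_bounded_distance:
  assumes "F \<in> Bd dX dY" "map_dist dX dY F G \<le> ereal c"
  shows "G \<in> Bd dX dY"
proof -
  obtain a where "map_dist dX dY F (\<lambda>_. 0) = ereal a"
    using assms(1) by (rule Bd_finite_distance)
  then have "map_dist dX dY G (\<lambda>_. 0) \<le> ereal (c + a)"
    using assms(2) map_dist_triangle[of G F c "\<lambda>_. 0" a] by (simp add: map_dist_commute)
  then show ?thesis
    unfolding Bd_def using le_less_trans by fastforce
qed

lemma map_dist_Bd:
  assumes "F \<in> Bd dX dY" "G \<in> Bd dX dY"
  shows "map_dist dX dY F G = ereal (Bd_dist dX dY F G)"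
proof -
  obtain a where "map_dist dX dY F (\<lambda>_. 0) = ereal a"
    using assms(1) by (rule Bd_finite_distance)
  moreover obtain b where "map_dist dX dY G (\<lambda>_. 0) = ereal b"
    using assms(2) by (rule Bd_finite_distance)
  ultimately have "map_dist dX dY F G \<le> ereal (a + b)"
    using map_dist_triangle[of F "\<lambda>_. 0" a G b] by (simp add: map_dist_commute)
  then show ?thesis
    unfolding Bd_dist_def using map_dist_nonneg[of F G] by (cases "map_dist dX dY F G") auto
qed

lemma Bd_dist_pointwise:
  assumes "F \<in> Bd dX dY" "G \<in> Bd dX dY"
  shows "dY (F x) (G x) \<le> Bd_dist dX dY F G * dist_weight dX x"
  using map_dist_le_iff map_dist_Bd[OF assms] by (metis order_refl)

lemma Metric_space_Bd: "Metric_space (Bd dX dY) (Bd_dist dX dY)"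
proof
  fix F G :: "'a \<Rightarrow> 'b"
  show "0 \<le> Bd_dist dX dY F G"
    unfolding Bd_dist_def using map_dist_nonneg by (rule real_of_ereal_pos)
  show "Bd_dist dX dY F G = Bd_dist dX dY G F"
    unfolding Bd_dist_def by (simp add: map_dist_commute)
next
  fix F G :: "'a \<Rightarrow> 'b"
  assume F: "F \<in> Bd dX dY" and G: "G \<in> Bd dX dY"
  show "Bd_dist dX dY F G = 0 \<longleftrightarrow> F = G"
  proof
    assume "Bd_dist dX dY F G = 0"
    then have "dY (F x) (G x) \<le> 0" for x
      using Bd_dist_pointwise[OF F G, of x] by simp
    then show "F = G"
      using Metric_space.nonneg[OF Y] Metric_space.zero[OF Y] by (metis UNIV_I order_antisym ext)
  qed (simp add: Bd_dist_def map_dist_self)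
next
  fix F G H :: "'a \<Rightarrow> 'b"
  assume F: "F \<in> Bd dX dY" and G: "G \<in> Bd dX dY" and H: "H \<in> Bd dX dY"
  have "map_dist dX dY F H \<le> ereal (Bd_dist dX dY F G + Bd_dist dX dY G H)"
    using map_dist_triangle[of F G _ H] map_dist_Bd[OF F G] map_dist_Bd[OF G H] by simp
  then show "Bd_dist dX dY F H \<le> Bd_dist dX dY F G + Bd_dist dX dY G H"
    using map_dist_Bd[OF F H] by simp
qed

interpretation Bd: Metric_space "Bd dX dY" "Bd_dist dX dY"
  by (rule Metric_space_Bd)

lemma MCauchy_Bd_pointwise:
  assumes "Bd.MCauchy \<sigma>"
  shows "Metric_space.MCauchy UNIV dY (\<lambda>n. \<sigma> n x)"
  unfolding Metric_space.MCauchy_def[OF Y]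
proof (intro conjI allI impI)
  fix e :: real assume "e > 0"
  then have "e / dist_weight dX x > 0"
    using dist_weight_pos by simp
  then obtain N where N: "\<And>n m. N \<le> n \<Longrightarrow> N \<le> m \<Longrightarrow> Bd_dist dX dY (\<sigma> n) (\<sigma> m) < e / dist_weight dX x"
    using assms unfolding Bd.MCauchy_def by blast
  have "dY (\<sigma> n x) (\<sigma> m x) < e" if "N \<le> n" "N \<le> m" for n m
  proof -
    have "dY (\<sigma> n x) (\<sigma> m x) \<le> Bd_dist dX dY (\<sigma> n) (\<sigma> m) * dist_weight dX x"
      using assms Bd_dist_pointwise by (simp add: Bd.MCauchy_def image_subset_iff)
    also have "\<dots> < e"
      using N[OF that] dist_weight_pos[of x] by (simp add: pos_less_divide_eq)
    finally show ?thesis .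
  qed
  then show "\<exists>N. \<forall>n n'. N \<le> n \<longrightarrow> N \<le> n' \<longrightarrow> dY (\<sigma> n x) (\<sigma> n' x) < e"
    by blast
qed simp

lemma map_dist_le_pointwise_limit:
  assumes \<sigma>: "range \<sigma> \<subseteq> Bd dX dY"
    and lim: "\<And>x. limitin (Metric_space.mtopology UNIV dY) (\<lambda>n. \<sigma> n x) (f x) sequentially"
    and cauchy: "\<And>m. N \<le> m \<Longrightarrow> Bd_dist dX dY (\<sigma> n) (\<sigma> m) \<le> e"
  shows "map_dist dX dY (\<sigma> n) f \<le> ereal e"
  unfolding map_dist_le_iff
proof
  fix x
  show "dY (\<sigma> n x) (f x) \<le> e * dist_weight dX x"
  proof (rule field_le_epsilon)
    fix d :: real assume "d > 0"
    then obtain M where M: "\<And>m. M \<le> m \<Longrightarrow> dY (\<sigma> m x) (f x) < d"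
      using lim[of x] unfolding Metric_space.limitin_metric[OF Y] eventually_sequentially by blast
    define m where "m = max M N"
    have "dY (\<sigma> n x) (\<sigma> m x) \<le> Bd_dist dX dY (\<sigma> n) (\<sigma> m) * dist_weight dX x"
      using Bd_dist_pointwise \<sigma> by blast
    also have "\<dots> \<le> e * dist_weight dX x"
      using cauchy[of m] dist_weight_pos[of x] by (simp add: m_def)
    finally have "dY (\<sigma> n x) (\<sigma> m x) \<le> e * dist_weight dX x" .
    moreover have "dY (\<sigma> n x) (f x) \<le> dY (\<sigma> n x) (\<sigma> m x) + dY (\<sigma> m x) (f x)"
      using Metric_space.triangle[OF Y] by simp
    ultimately show "dY (\<sigma> n x) (f x) \<le> e * dist_weight dX x + d"
      using M[of m] by (simp add: m_def)
  qed
qed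

lemma mcomplete_Bd:
  assumes "Metric_space.mcomplete UNIV dY"
  shows "Bd.mcomplete"
  unfolding Bd.mcomplete_def
proof (intro allI impI)
  fix \<sigma> :: "nat \<Rightarrow> 'a \<Rightarrow> 'b"
  assume C: "Bd.MCauchy \<sigma>"
  then have \<sigma>: "range \<sigma> \<subseteq> Bd dX dY"
    by (simp add: Bd.MCauchy_def)
  have "\<forall>x. \<exists>y. limitin (Metric_space.mtopology UNIV dY) (\<lambda>n. \<sigma> n x) y sequentially"
    using assms MCauchy_Bd_pointwise[OF C] unfolding Metric_space.mcomplete_def[OF Y] by blast
  then obtain f where lim: "\<And>x. limitin (Metric_space.mtopology UNIV dY) (\<lambda>n. \<sigma> n x) (f x) sequentially"
    by metis
  have close: "\<exists>N. \<forall>n\<ge>N. map_dist dX dY (\<sigma> n) f \<le> ereal e" if "e > 0" for e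
  proof -
    obtain N where N: "\<And>n m. N \<le> n \<Longrightarrow> N \<le> m \<Longrightarrow> Bd_dist dX dY (\<sigma> n) (\<sigma> m) < e"
      using C \<open>e > 0\<close> unfolding Bd.MCauchy_def by blast
    have "map_dist dX dY (\<sigma> n) f \<le> ereal e" if "N \<le> n" for n
    proof (rule map_dist_le_pointwise_limit[OF \<sigma> lim])
      fix m assume "N \<le> m"
      then show "Bd_dist dX dY (\<sigma> n) (\<sigma> m) \<le> e"
        using N[OF that] by (simp add: less_imp_le)
    qed
    then show ?thesis by blast
  qed
  then obtain N where "map_dist dX dY (\<sigma> N) f \<le> ereal 1"
    using zero_less_one by blast
  then have f: "f \<in> Bd dX dY"
    using Bd_bounded_distance[of "\<sigma> N" f 1] \<sigma> by blast
  have "\<forall>\<^sub>F n in sequentially. \<sigma> n \<in> Bd dX dY \<and> Bd_dist dX dY (\<sigma> n) f < e" if "e > 0" for e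
  proof -
    obtain N where N: "\<And>n. N \<le> n \<Longrightarrow> map_dist dX dY (\<sigma> n) f \<le> ereal (e / 2)"
      using close[of "e / 2"] \<open>e > 0\<close> by auto
    have "\<sigma> n \<in> Bd dX dY \<and> Bd_dist dX dY (\<sigma> n) f < e" if "N \<le> n" for n
    proof
      show \<sigma>n: "\<sigma> n \<in> Bd dX dY"
        using \<sigma> by blast
      have "Bd_dist dX dY (\<sigma> n) f \<le> e / 2"
        using N[OF that] map_dist_Bd[OF \<sigma>n f] by simp
      then show "Bd_dist dX dY (\<sigma> n) f < e"
        using \<open>e > 0\<close> by linarith
    qed
    then show ?thesis
      unfolding eventually_sequentially by blast
  qed
  then show "\<exists>g. limitin Bd.mtopology \<sigma> g sequentially"
    using f unfolding Bd.limitin_metric by blast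
qed

end

theorem corollary10:
  fixes dX :: "'a::real_vector \<Rightarrow> 'a \<Rightarrow> real" and dY :: "'b::real_vector \<Rightarrow> 'b \<Rightarrow> real"
  assumes "metric_tvs dX" and "metric_tvs dY"
    and "Metric_space.mcomplete UNIV dY"
  shows "Metric_space (Bd dX dY) (Bd_dist dX dY) \<and>
         Metric_space.mcomplete (Bd dX dY) (Bd_dist dX dY)"
proof -
  have "Metric_space UNIV dX" "Metric_space UNIV dY"
    using assms(1,2) by (simp_all add: metric_tvs_def)
  then interpret map_metric dX dY
    by (rule map_metric.intro)
  show ?thesis
    using Metric_space_Bd mcomplete_Bd[OF assms(3)] by blast
qed

end
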